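(* Let $q$ be a prime number, $l\ge 2$ an integer, and $\alpha=\alpha_1/\alpha_2\in\mathbb{Q}\text{-}\mathcal{KS}(q^{l})$. Then $\alpha\in\,]0,1[$ if and only if there exists a positive integer $d$ with $d\mid(q^{l}-q)$ such that $$\alpha=q-\frac{d}{\alpha_2}\quad\text{and}\quad \alpha_2\in\Bigl\{\Bigl\lfloor\frac{d}{q}\Bigr\rfloor+1,\dots,\Bigl\lceil\frac{d}{q-1}\Bigr\rceil-1\Bigr\}.$$
   Context: Every nonzero rational $\alpha$ is written $\alpha=\alpha_1/\alpha_2$ with $\alpha_1\in\mathbb{Z}$, $\alpha_2$ a positive integer and $\gcd(\alpha_1,\alpha_2)=1$. For an integer $N\ge 2$ and a nonzero rational $\alpha=\alpha_1/\alpha_2$, $N$ is called an $\alpha$-Korselt number if $N\neq\alpha$ and $\alpha_2p-\alpha_1$ divides $\alpha_2N-\alpha_1$ (in $\mathbb{Z}$) for every prime divisor $p$ of $N$. $\mathbb{Q}\text{-}\mathcal{KS}(N)$ is the set of all $\beta\in\mathbb{Q}\setminus\{0,N\}$ such that $N$ is a $\beta$-Korselt number. $\lfloor\cdot\rfloor$ and $\lceil\cdot\rceil$ are the floor and ceiling functions; $\{a,\dots,b\}$ is the set of integers from $a$ to $b$ (empty if $a>b$). *)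

theory Defs
  imports Complex_Main "HOL-Computational_Algebra.Primes"
begin

definition num :: "rat \<Rightarrow> int" where "num a = fst (quotient_of a)"
definition den :: "rat \<Rightarrow> int" where "den a = snd (quotient_of a)"

definition korselt :: "nat \<Rightarrow> rat \<Rightarrow> bool" where
  "korselt N a \<longleftrightarrow> N \<ge> 2 \<and> a \<noteq> 0 \<and> a \<noteq> of_nat N \<and>
     (\<forall>p. prime p \<longrightarrow> p dvd N \<longrightarrow>
        (den a * int p - num a) dvd (den a * int N - num a))"

definition QKS :: "nat \<Rightarrow> rat set" where
  "QKS N = {b. b \<noteq> 0 \<and> b \<noteq> of_nat N \<and> korselt N b}"

end

theory Submission
  imports Defs
begin

text \<open>Write \<open>\<alpha> = \<alpha>\<^sub>1/\<alpha>\<^sub>2\<close> and \<open>d = \<alpha>\<^sub>2 q - \<alpha>\<^sub>1\<close>, so that \<open>\<alpha> = q - d/\<alpha>\<^sub>2\<close> holds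
  by construction. For any \<open>d\<close> with \<open>\<alpha> = q - d/\<alpha>\<^sub>2\<close>, the condition \<open>0 < \<alpha> < 1\<close> is
  just \<open>d/q < \<alpha>\<^sub>2 < d/(q - 1)\<close>, i.e. the stated range for \<open>\<alpha>\<^sub>2\<close>. The Korselt condition
  at the prime \<open>q\<close> says \<open>d\<close> divides \<open>\<alpha>\<^sub>2 q\<^sup>l - \<alpha>\<^sub>1 = d + \<alpha>\<^sub>2 (q\<^sup>l - q)\<close>; since \<open>d\<close> is
  coprime to \<open>\<alpha>\<^sub>2\<close> (because \<open>\<alpha>\<^sub>1\<close> is), \<open>d\<close> divides \<open>q\<^sup>l - q\<close>.\<close>

lemma den_pos: "den a > 0"
  unfolding den_def by (metis prod.collapse quotient_of_denom_pos)

lemma coprime_num_den: "coprime (num a) (den a)"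
  unfolding num_def den_def by (metis prod.collapse quotient_of_coprime)

lemma num_div_den: "of_int (num a) / of_int (den a) = a"
  unfolding num_def den_def by (metis prod.collapse quotient_of_div)

lemma eq_diff_div_den: "a = of_int c - of_int (den a * c - num a) / of_int (den a)"
proof -
  have "(of_int (den a) :: rat) \<noteq> 0" using den_pos[of a] by simp
  then show ?thesis
    by (subst (1) num_div_den[symmetric]) (simp add: diff_divide_distrib)
qed

lemma den_mult_minus_num_pos:
  assumes "a < of_int c"
  shows "0 < den a * c - num a"
proof -
  have "of_int (num a) / of_int (den a) < (of_int c :: rat)"
    using assms by (simp add: num_div_den)
  then have "(of_int (num a) :: rat) < of_int c * of_int (den a)"
    using den_pos[of a] by (simp add: divide_less_eq)
  then have "num a < c * den a"
    by (metis of_int_less_iff of_int_mult)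
  then show ?thesis by (simp add: algebra_simps)
qed

lemma gcd_mult_diff_left: "gcd (b * p - a) b = gcd a (b :: int)"
proof -
  have "gcd b (p * b + - a) = gcd b (- a)" by (rule gcd_add_mult)
  then show ?thesis by (simp add: gcd.commute algebra_simps)
qed

lemma dvd_diff_if_dvd_linear:
  fixes a b p n :: int
  assumes "coprime a b" and "(b * p - a) dvd (b * n - a)"
  shows "(b * p - a) dvd (n - p)"
proof -
  have "coprime (b * p - a) b"
    using assms(1) gcd_mult_diff_left[of b p a] by (simp add: coprime_iff_gcd_eq_1)
  moreover have "b * n - a = (b * p - a) + b * (n - p)"
    by (simp add: algebra_simps)
  then have "(b * p - a) dvd b * (n - p)"
    using assms(2) by (metis dvd_add_right_iff dvd_refl)
  ultimately show ?thesis
    using coprime_dvd_mult_right_iff by blast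
qed

lemma korselt_dvd_diff:
  assumes "korselt N a" and "prime p" and "p dvd N"
  shows "(den a * int p - num a) dvd (int N - int p)"
  using assms coprime_num_den[of a] dvd_diff_if_dvd_linear unfolding korselt_def by blast

lemma korselt_prime_power_dvd:
  assumes "prime q" and "l \<ge> 1" and "korselt (q ^ l) a"
  shows "(den a * int q - num a) dvd int (q ^ l - q)"
proof -
  have "q dvd q ^ l" and "q \<le> q ^ l"
    using assms(1,2) prime_gt_1_nat[OF assms(1)] by (auto simp: dvd_power self_le_power)
  then show ?thesis
    using korselt_dvd_diff[OF assms(3,1)] by simp
qed

lemma korselt_prime_power_repr:
  assumes "prime q" and "l \<ge> 1" and "korselt (q ^ l) a" and "a < of_nat q"
  shows "\<exists>d::nat. 0 < d \<and> d dvd q ^ l - q \<and> a = of_nat q - of_nat d / of_int (den a)"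
proof -
  define D where "D = den a * int q - num a"
  have "0 < D"
    unfolding D_def using assms(4) by (intro den_mult_minus_num_pos) simp
  moreover have "D dvd int (q ^ l - q)"
    unfolding D_def using assms(1-3) by (rule korselt_prime_power_dvd)
  moreover have "a = of_nat q - of_nat (nat D) / of_int (den a)"
    using eq_diff_div_den[of a "int q"] \<open>0 < D\<close> unfolding D_def by simp
  ultimately show ?thesis
    by (intro exI[of _ "nat D"]) (simp add: nat_dvd_iff)
qed

lemma mem_floor_ceiling_interval_iff:
  fixes x y :: "'a :: floor_ceiling"
  shows "n \<in> {\<lfloor>x\<rfloor> + 1 .. \<lceil>y\<rceil> - 1} \<longleftrightarrow> x < of_int n \<and> of_int n < y"
proof -
  have "n \<in> {\<lfloor>x\<rfloor> + 1 .. \<lceil>y\<rceil> - 1} \<longleftrightarrow> \<lfloor>x\<rfloor> < n \<and> n < \<lceil>y\<rceil>"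
    by auto
  then show ?thesis by (simp add: floor_less_iff less_ceiling_iff)
qed

lemma diff_div_in_unit_interval_iff:
  fixes b c x :: "'a :: linordered_field"
  assumes "0 < b" and "1 < c"
  shows "(0 < c - x / b \<and> c - x / b < 1) \<longleftrightarrow> x / c < b \<and> b < x / (c - 1)"
  using assms by (simp add: field_simps)

lemma unit_interval_iff_den_bounds:
  fixes a c x :: rat
  assumes "1 < c" and "a = c - x / of_int (den a)"
  shows "(0 < a \<and> a < 1) \<longleftrightarrow> den a \<in> {\<lfloor>x / c\<rfloor> + 1 .. \<lceil>x / (c - 1)\<rceil> - 1}"
  unfolding mem_floor_ceiling_interval_iff
  using diff_div_in_unit_interval_iff[of "of_int (den a)" c x] assms den_pos[of a] by simp

theorem proposition5p5:
  fixes q l :: nat and \<alpha> :: rat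
  assumes "prime q" and "l \<ge> 2" and "\<alpha> \<in> QKS (q ^ l)"
  shows "(0 < \<alpha> \<and> \<alpha> < 1) \<longleftrightarrow>
    (\<exists>d::nat. d > 0 \<and> d dvd (q ^ l - q) \<and>
       \<alpha> = of_nat q - of_nat d / of_int (den \<alpha>) \<and>
       den \<alpha> \<in> {\<lfloor>(of_nat d / of_nat q :: rat)\<rfloor> + 1 ..
                    \<lceil>(of_nat d / (of_nat q - 1) :: rat)\<rceil> - 1})"
proof -
  have "1 < (of_nat q :: rat)"
    using prime_gt_1_nat[OF assms(1)] by simp
  moreover have "\<exists>d::nat. 0 < d \<and> d dvd q ^ l - q \<and> \<alpha> = of_nat q - of_nat d / of_int (den \<alpha>)"
    if "\<alpha> < 1"
    using that assms \<open>1 < (of_nat q :: rat)\<close>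
    by (intro korselt_prime_power_repr) (auto simp: QKS_def)
  ultimately show ?thesis
    using unit_interval_iff_den_bounds by blast
qed

end
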